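(* Consider the mining game with $N\ge 2$ miners, costs-per-hash $0<c_1\le\dots\le c_N$, reward $R>0$ and capacity parameter $\gamma\ge0$. The number of active miners in the unique equilibrium hash rate profile is the largest integer $n$ with $2\le n\le N$ such that $$c_n<\frac{c^{(n)}+R\gamma/c_n}{n-1},\qquad c^{(n)}=\sum_{i=1}^n c_i.$$ This number $n$ is (weakly) increasing in $R$ and in $\gamma$.
   Context: Mining game: $N\ge2$ miners with costs-per-hash $0<c_1\le\dots\le c_N$; each miner $i$ chooses $h_i\ge0$, $H=\sum_j h_j$, and the payoff of miner $i$ is $\frac{h_i}{H}R-c_ih_i-\frac{\gamma}{2}h_i^2$ if $H>0$, and $0$ if $H=0$. An equilibrium hash rate profile is a pure-strategy Nash equilibrium $h^*\in[0,\infty)^N$; it exists and is unique. Miner $i$ is active if $h_i^*>0$. *)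

theory Defs
  imports Complex_Main
begin

text \<open>Miners are indexed by 1..N; a hash rate profile is a function nat to real,
  only its values on 1..N matter.\<close>

definition total_hash :: "nat \<Rightarrow> (nat \<Rightarrow> real) \<Rightarrow> real" where
  "total_hash N h = (\<Sum>j\<in>{1..N}. h j)"

definition payoff :: "nat \<Rightarrow> real \<Rightarrow> real \<Rightarrow> (nat \<Rightarrow> real) \<Rightarrow> (nat \<Rightarrow> real) \<Rightarrow> nat \<Rightarrow> real" where
  "payoff N R \<gamma> c h i =
     (if total_hash N h > 0
      then h i / total_hash N h * R - c i * h i - \<gamma> / 2 * (h i)\<^sup>2
      else 0)"

definition is_equilibrium :: "nat \<Rightarrow> real \<Rightarrow> real \<Rightarrow> (nat \<Rightarrow> real) \<Rightarrow> (nat \<Rightarrow> real) \<Rightarrow> bool" where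
  "is_equilibrium N R \<gamma> c h \<longleftrightarrow>
     (\<forall>i\<in>{1..N}. h i \<ge> 0) \<and>
     (\<forall>i\<in>{1..N}. \<forall>x::real. x \<ge> 0 \<longrightarrow> payoff N R \<gamma> c (h(i := x)) i \<le> payoff N R \<gamma> c h i)"

definition active_miners :: "nat \<Rightarrow> (nat \<Rightarrow> real) \<Rightarrow> nat set" where
  "active_miners N h = {i\<in>{1..N}. h i > 0}"

definition num_active :: "nat \<Rightarrow> real \<Rightarrow> real \<Rightarrow> (nat \<Rightarrow> real) \<Rightarrow> nat" where
  "num_active N R \<gamma> c =
     (GREATEST n. 2 \<le> n \<and> n \<le> N \<and>
        c n < ((\<Sum>i\<in>{1..n}. c i) + R * \<gamma> / c n) / (real n - 1))"

end

theory Submission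
  imports Defs
begin

text \<open>
  Against a total hash rate S > 0 of the others, a miner's payoff is concave in its own rate h,
  so h is a best response iff the first-order (KKT) condition R S \<le> (c + \<gamma> h) (h + S)^2 holds,
  with equality when h > 0.  Written in terms of the total H = h + S this condition says
  h = H max 0 (R - c H) / (R + \<gamma> H^2); hence an equilibrium is determined by its total H,
  and the active miners are exactly those with c_i H < R, a prefix 1..n of the sorted miners.
  Nobody hashes alone in equilibrium (a lone miner collects R at any positive rate and gains by
  lowering it), so H > 0, and summing the individual rates gives \<gamma> H^2 + c^(n) H = (n - 1) R.
  With u = R / c_n the condition of the theorem reads (n - 1) R < \<gamma> u^2 + c^(n) u; since the
  left side of the aggregate equation is increasing in H, the equilibrium n is the largest n
  satisfying it, and an equilibrium exists for that n.  The condition depends on R and \<gamma> only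
  through R \<gamma>, which gives the monotonicity.
\<close>

section \<open>Best response of a single miner\<close>

definition payoff_against :: "real \<Rightarrow> real \<Rightarrow> real \<Rightarrow> real \<Rightarrow> real \<Rightarrow> real" where
  "payoff_against R \<gamma> c S x = x / (x + S) * R - c * x - \<gamma> / 2 * x\<^sup>2"

lemma payoff_against_diff:
  assumes "0 < x + S" "0 < h + S"
  shows "payoff_against R \<gamma> c S x - payoff_against R \<gamma> c S h =
    (x - h) * ((R * S / (h + S)\<^sup>2 - c - \<gamma> * h) - (x - h) * (R * S / ((x + S) * (h + S)\<^sup>2) + \<gamma> / 2))"
proof -
  obtain a b where x: "x = a - S" and h: "h = b - S" and "a \<noteq> 0" "b \<noteq> 0"
    using assms by (metis add_diff_cancel_right' less_irrefl)
  then show ?thesis unfolding payoff_against_def x h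
    by (simp add: field_simps power2_eq_square)
qed

lemma has_real_derivative_payoff_against:
  assumes "0 < h + S"
  shows "(payoff_against R \<gamma> c S has_real_derivative R * S / (h + S)\<^sup>2 - c - \<gamma> * h) (at h)"
  unfolding payoff_against_def[abs_def] using assms
  by (auto intro!: derivative_eq_intros) (simp add: field_simps power2_eq_square)

lemma payoff_against_max_iff:
  assumes "0 < S" "0 \<le> h" "0 \<le> R" "0 \<le> \<gamma>"
  shows "(\<forall>x\<ge>0. payoff_against R \<gamma> c S x \<le> payoff_against R \<gamma> c S h) \<longleftrightarrow>
    R * S \<le> (c + \<gamma> * h) * (h + S)\<^sup>2 \<and> (0 < h \<longrightarrow> R * S = (c + \<gamma> * h) * (h + S)\<^sup>2)"
proof -
  let ?f = "payoff_against R \<gamma> c S"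
  define D where "D = R * S / (h + S)\<^sup>2 - c - \<gamma> * h"
  have hS: "0 < h + S" using assms by simp
  have deriv: "(?f has_real_derivative D) (at h)"
    unfolding D_def using hS by (rule has_real_derivative_payoff_against)
  have kkt_iff: "R * S \<le> (c + \<gamma> * h) * (h + S)\<^sup>2 \<and> (0 < h \<longrightarrow> R * S = (c + \<gamma> * h) * (h + S)\<^sup>2)
      \<longleftrightarrow> D \<le> 0 \<and> (0 < h \<longrightarrow> D = 0)"
    using hS by (simp add: D_def field_simps)
  have "(\<forall>x\<ge>0. ?f x \<le> ?f h) \<longleftrightarrow> D \<le> 0 \<and> (0 < h \<longrightarrow> D = 0)"
  proof
    assume max: "\<forall>x\<ge>0. ?f x \<le> ?f h"
    have "D \<le> 0"
    proof (rule ccontr)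
      assume "\<not> D \<le> 0"
      then obtain d where "0 < d" and "\<forall>t>0. t < d \<longrightarrow> ?f h < ?f (h + t)"
        using DERIV_pos_inc_right[OF deriv] by auto
      then have "?f h < ?f (h + d / 2)" by simp
      moreover have "?f (h + d / 2) \<le> ?f h" using max \<open>0 \<le> h\<close> \<open>0 < d\<close> by simp
      ultimately show False by simp
    qed
    moreover have "D = 0" if "0 < h"
      by (rule DERIV_local_max[OF deriv that]) (use max in auto)
    ultimately show "D \<le> 0 \<and> (0 < h \<longrightarrow> D = 0)" by blast
  next
    assume kkt: "D \<le> 0 \<and> (0 < h \<longrightarrow> D = 0)"
    show "\<forall>x\<ge>0. ?f x \<le> ?f h"
    proof (intro allI impI)
      fix x :: real
      assume "0 \<le> x"
      define Q where "Q = R * S / ((x + S) * (h + S)\<^sup>2) + \<gamma> / 2"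
      have "(x - h) * D \<le> 0"
        using kkt \<open>0 \<le> x\<close> \<open>0 \<le> h\<close> by (cases "h = 0") (auto simp: mult_nonneg_nonpos)
      moreover have "0 \<le> (x - h)\<^sup>2 * Q"
        using assms \<open>0 \<le> x\<close> by (simp add: Q_def)
      moreover have "?f x - ?f h = (x - h) * D - (x - h)\<^sup>2 * Q"
        using payoff_against_diff[of x S h R \<gamma> c] assms \<open>0 \<le> x\<close>
        unfolding D_def[symmetric] Q_def[symmetric] by (simp add: algebra_simps power2_eq_square)
      ultimately show "?f x \<le> ?f h" by linarith
    qed
  qed
  with kkt_iff show ?thesis by simp
qed

section \<open>Equilibria as consistent total hash rates\<close>

lemma total_hash_fun_upd:
  assumes "i \<in> {1..N}"
  shows "total_hash N (h(i := x)) = total_hash N h - h i + x"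
proof -
  have "total_hash N (h(i := x)) = x + (\<Sum>j\<in>{1..N} - {i}. h j)"
    using assms by (simp add: total_hash_def sum.remove)
  moreover have "total_hash N h = h i + (\<Sum>j\<in>{1..N} - {i}. h j)"
    using assms by (simp add: total_hash_def sum.remove)
  ultimately show ?thesis by simp
qed

lemma payoff_fun_upd:
  assumes "i \<in> {1..N}" "0 < total_hash N h - h i + x"
  shows "payoff N R \<gamma> c (h(i := x)) i = payoff_against R \<gamma> (c i) (total_hash N h - h i) x"
  using assms by (simp add: payoff_def payoff_against_def total_hash_fun_upd add.commute)

text \<open>The first-order condition solved for a miner's rate in terms of the total H = h + S.\<close>

definition hash_given_total :: "real \<Rightarrow> real \<Rightarrow> real \<Rightarrow> real \<Rightarrow> real" where
  "hash_given_total R \<gamma> c H = H * max 0 (R - c * H) / (R + \<gamma> * H\<^sup>2)"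

lemma kkt_iff_hash_given_total:
  assumes "0 < H" "0 \<le> h" "0 < R" "0 \<le> \<gamma>"
  shows "R * (H - h) \<le> (c + \<gamma> * h) * H\<^sup>2 \<and> (0 < h \<longrightarrow> R * (H - h) = (c + \<gamma> * h) * H\<^sup>2)
    \<longleftrightarrow> h = hash_given_total R \<gamma> c H"
proof -
  define T where "T = H * (R - c * H)"
  define D where "D = R + \<gamma> * H\<^sup>2"
  have D: "0 < D" using assms by (simp add: D_def add_pos_nonneg)
  have le: "R * (H - h) \<le> (c + \<gamma> * h) * H\<^sup>2 \<longleftrightarrow> T \<le> h * D"
    and eq: "R * (H - h) = (c + \<gamma> * h) * H\<^sup>2 \<longleftrightarrow> h * D = T"
    by (auto simp: T_def D_def algebra_simps power2_eq_square)
  have "T \<le> h * D \<and> (0 < h \<longrightarrow> h * D = T) \<longleftrightarrow> h = max 0 T / D"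
    using D \<open>0 \<le> h\<close> by (cases "h = 0") (auto simp: max_def eq_divide_eq)
  moreover have "hash_given_total R \<gamma> c H = max 0 T / D"
    using assms by (simp add: hash_given_total_def T_def D_def max_mult_distrib_left)
  ultimately show ?thesis
    unfolding le eq by simp
qed

lemma hash_given_total_pos_iff:
  assumes "0 < H" "0 < R" "0 \<le> \<gamma>"
  shows "0 < hash_given_total R \<gamma> c H \<longleftrightarrow> c * H < R"
proof -
  have "0 < R + \<gamma> * H\<^sup>2" using assms by (simp add: add_pos_nonneg)
  then show ?thesis
    using assms by (auto simp: hash_given_total_def zero_less_divide_iff zero_less_mult_iff)
qed

lemma hash_given_total_bounds:
  assumes "0 < H" "0 < R" "0 \<le> \<gamma>" "0 < c"
  shows "0 \<le> hash_given_total R \<gamma> c H" "hash_given_total R \<gamma> c H < H"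
proof -
  have D: "0 < R + \<gamma> * H\<^sup>2" using assms by (simp add: add_pos_nonneg)
  show "0 \<le> hash_given_total R \<gamma> c H" using assms D by (simp add: hash_given_total_def)
  have "0 < c * H" "0 \<le> \<gamma> * H\<^sup>2" using assms by simp_all
  then have "max 0 (R - c * H) < R + \<gamma> * H\<^sup>2" using D by simp
  then have "H * max 0 (R - c * H) < H * (R + \<gamma> * H\<^sup>2)" using assms by simp
  then show "hash_given_total R \<gamma> c H < H" using D by (simp add: hash_given_total_def divide_less_eq)
qed

lemma is_equilibrium_iff_hash_given_total:
  assumes nonneg: "\<forall>i\<in>{1..N}. 0 \<le> h i" and others: "\<forall>i\<in>{1..N}. h i < total_hash N h"
    and "0 < R" "0 \<le> \<gamma>"
  shows "is_equilibrium N R \<gamma> c h \<longleftrightarrow>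
    (\<forall>i\<in>{1..N}. h i = hash_given_total R \<gamma> (c i) (total_hash N h))"
proof -
  let ?H = "total_hash N h"
  have "(\<forall>x\<ge>0. payoff N R \<gamma> c (h(i := x)) i \<le> payoff N R \<gamma> c h i) \<longleftrightarrow>
      h i = hash_given_total R \<gamma> (c i) ?H"
    if i: "i \<in> {1..N}" for i
  proof -
    have S: "0 < ?H - h i" using others i by simp
    have H: "0 < ?H" using S nonneg i by (meson diff_gt_0_iff_gt le_less_trans)
    have "payoff N R \<gamma> c (h(i := x)) i = payoff_against R \<gamma> (c i) (?H - h i) x" if "0 \<le> x" for x
      using payoff_fun_upd[OF i] S that by simp
    moreover have "payoff N R \<gamma> c h i = payoff_against R \<gamma> (c i) (?H - h i) (h i)"
      using payoff_fun_upd[OF i, of h "h i"] H by simp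
    ultimately show ?thesis
      using payoff_against_max_iff[OF S, of "h i" R \<gamma> "c i"]
        kkt_iff_hash_given_total[OF H, of "h i" R \<gamma> "c i"] nonneg i assms by simp
  qed
  then show ?thesis using nonneg unfolding is_equilibrium_def by auto
qed

lemma sum_hash_given_total_eq_iff:
  fixes c :: "nat \<Rightarrow> real"
  assumes "0 < H" "0 < R" "0 \<le> \<gamma>" "n \<le> N"
    and "\<forall>i\<in>{1..n}. c i * H < R" "\<forall>i\<in>{n<..N}. R \<le> c i * H"
  shows "(\<Sum>i\<in>{1..N}. hash_given_total R \<gamma> (c i) H) = H \<longleftrightarrow>
    \<gamma> * H\<^sup>2 + (\<Sum>i\<in>{1..n}. c i) * H = (real n - 1) * R"
proof -
  define C where "C = (\<Sum>i\<in>{1..n}. c i)"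
  define D where "D = R + \<gamma> * H\<^sup>2"
  have D: "0 < D" using assms by (simp add: D_def add_pos_nonneg)
  have "(\<Sum>i\<in>{1..N}. hash_given_total R \<gamma> (c i) H) = (\<Sum>i\<in>{1..n}. hash_given_total R \<gamma> (c i) H)"
    using assms by (intro sum.mono_neutral_right) (auto simp: hash_given_total_def)
  also have "\<dots> = (\<Sum>i\<in>{1..n}. H / D * (R - c i * H))"
    using assms by (intro sum.cong) (auto simp: hash_given_total_def D_def)
  also have "\<dots> = H / D * (\<Sum>i\<in>{1..n}. R - c i * H)"
    by (rule sum_distrib_left[symmetric])
  also have "(\<Sum>i\<in>{1..n}. R - c i * H) = real n * R - C * H"
    by (simp add: C_def sum_subtractf sum_distrib_right)
  finally have sum: "(\<Sum>i\<in>{1..N}. hash_given_total R \<gamma> (c i) H) = H / D * (real n * R - C * H)" .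
  have "H / D * (real n * R - C * H) = H \<longleftrightarrow> real n * R - C * H = D"
    using D \<open>0 < H\<close> by (simp add: nonzero_divide_eq_eq)
  also have "\<dots> \<longleftrightarrow> \<gamma> * H\<^sup>2 + C * H = (real n - 1) * R"
    by (auto simp: D_def algebra_simps)
  finally show ?thesis unfolding sum C_def .
qed

lemma down_closed_eq_atLeastAtMost_card:
  assumes "A \<subseteq> {1..(N::nat)}" and "\<forall>j\<in>A. \<forall>i. 1 \<le> i \<and> i \<le> j \<longrightarrow> i \<in> A"
  shows "A = {1..card A}"
proof (cases "A = {}")
  case False
  have "finite A" using assms(1) finite_subset by blast
  then have "Max A \<in> A" using False by simp
  have "A = {1..Max A}"
  proof
    show "A \<subseteq> {1..Max A}" using assms(1) \<open>finite A\<close> by (auto intro: Max_ge)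
    show "{1..Max A} \<subseteq> A" using assms(2) \<open>Max A \<in> A\<close> by auto
  qed
  then show ?thesis by (metis card_atLeastAtMost diff_Suc_1)
qed simp

definition viable :: "nat \<Rightarrow> real \<Rightarrow> real \<Rightarrow> (nat \<Rightarrow> real) \<Rightarrow> nat \<Rightarrow> bool" where
  "viable N R \<gamma> c n \<longleftrightarrow>
     2 \<le> n \<and> n \<le> N \<and> c n < ((\<Sum>i\<in>{1..n}. c i) + R * \<gamma> / c n) / (real n - 1)"

lemma num_active_eq_Greatest: "num_active N R \<gamma> c = (GREATEST n. viable N R \<gamma> c n)"
  unfolding num_active_def viable_def ..

lemma
  assumes "viable N R \<gamma> c m"
  shows viable_num_active: "viable N R \<gamma> c (num_active N R \<gamma> c)"
    and le_num_active: "m \<le> num_active N R \<gamma> c"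
proof -
  have bound: "\<And>n. viable N R \<gamma> c n \<Longrightarrow> n \<le> N" by (simp add: viable_def)
  show "viable N R \<gamma> c (num_active N R \<gamma> c)"
    unfolding num_active_eq_Greatest by (rule GreatestI_nat[where P = "viable N R \<gamma> c", OF assms bound])
  show "m \<le> num_active N R \<gamma> c"
    unfolding num_active_eq_Greatest by (rule Greatest_le_nat[where P = "viable N R \<gamma> c", OF assms bound])
qed

lemma viable_mono:
  assumes "viable N R \<gamma> c n" "0 < c n" "R * \<gamma> \<le> R' * \<gamma>'"
  shows "viable N R' \<gamma>' c n"
proof -
  have "((\<Sum>i\<in>{1..n}. c i) + R * \<gamma> / c n) / (real n - 1) \<le>
      ((\<Sum>i\<in>{1..n}. c i) + R' * \<gamma>' / c n) / (real n - 1)"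
    using assms by (intro divide_right_mono add_left_mono) (auto simp: viable_def)
  then show ?thesis using assms(1) unfolding viable_def by linarith
qed

lemma num_active_mono:
  assumes "viable N R \<gamma> c m" "\<forall>i\<in>{1..N}. 0 < c i" "R * \<gamma> \<le> R' * \<gamma>'"
  shows "num_active N R \<gamma> c \<le> num_active N R' \<gamma>' c"
proof -
  let ?n = "num_active N R \<gamma> c"
  have "viable N R \<gamma> c ?n" using assms(1) by (rule viable_num_active)
  moreover have "0 < c ?n" using calculation assms(2) by (simp add: viable_def)
  ultimately have "viable N R' \<gamma>' c ?n" using assms(3) by (rule viable_mono)
  then show ?thesis by (rule le_num_active)
qed

section \<open>Equilibria with sorted costs\<close>

lemma quadratic_root:
  fixes C a \<gamma> :: real
  assumes "0 < C" "0 < a" "0 \<le> \<gamma>"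
  shows "\<exists>H>0. \<gamma> * H\<^sup>2 + C * H = a"
proof -
  have "\<exists>H. 0 \<le> H \<and> H \<le> a / C \<and> \<gamma> * H\<^sup>2 + C * H = a"
    using assms by (intro IVT') (auto intro!: continuous_intros)
  then obtain H where "0 \<le> H" "\<gamma> * H\<^sup>2 + C * H = a" by blast
  moreover from this have "H \<noteq> 0" using \<open>0 < a\<close> by auto
  ultimately have "0 < H" "\<gamma> * H\<^sup>2 + C * H = a" by simp_all
  then show ?thesis by blast
qed

locale mining_game =
  fixes N :: nat and R \<gamma> :: real and c :: "nat \<Rightarrow> real"
  assumes two_le_N: "2 \<le> N"
    and cost_pos_1: "0 < c 1"
    and cost_mono: "mono_on {1..N} c"
    and reward_pos: "0 < R"
    and capacity_nonneg: "0 \<le> \<gamma>"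
begin

lemma cost_le: "1 \<le> i \<Longrightarrow> i \<le> j \<Longrightarrow> j \<le> N \<Longrightarrow> c i \<le> c j"
  using cost_mono by (auto intro: mono_onD)

lemma cost_pos: "i \<in> {1..N} \<Longrightarrow> 0 < c i"
  using cost_le[of 1 i] cost_pos_1 by auto

lemma equilibrium_hash_lt_total:
  assumes eq: "is_equilibrium N R \<gamma> c h" and i: "i \<in> {1..N}"
  shows "h i < total_hash N h"
proof (rule ccontr)
  let ?H = "total_hash N h"
  have nonneg: "\<forall>j\<in>{1..N}. 0 \<le> h j"
    and opt: "\<forall>x\<ge>0. payoff N R \<gamma> c (h(i := x)) i \<le> payoff N R \<gamma> c h i"
    using eq i unfolding is_equilibrium_def by auto
  assume "\<not> h i < ?H"
  moreover have "h i \<le> ?H" unfolding total_hash_def using nonneg i by (intro member_le_sum) auto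
  ultimately have alone: "h i = ?H" by simp
  have dev: "payoff N R \<gamma> c (h(i := x)) i = R - c i * x - \<gamma> / 2 * x\<^sup>2" if "0 < x" for x
    using payoff_fun_upd[OF i, of h x] alone that by (simp add: payoff_against_def)
  have less: "payoff N R \<gamma> c h i < R"
  proof (cases "h i = 0")
    case True
    then show ?thesis using alone reward_pos by (simp add: payoff_def)
  next
    case False
    moreover have "0 \<le> h i" using nonneg i by blast
    ultimately have "0 < h i" by simp
    then have "0 < c i * h i" "0 \<le> \<gamma> / 2 * (h i)\<^sup>2" using cost_pos[OF i] capacity_nonneg by simp_all
    then show ?thesis using dev[of "h i"] \<open>0 < h i\<close> by simp
  qed
  have "((\<lambda>x. R - c i * x - \<gamma> / 2 * x\<^sup>2) \<longlongrightarrow> R) (at_right 0)"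
    by (auto intro!: tendsto_eq_intros)
  then have "\<forall>\<^sub>F x in at_right 0. payoff N R \<gamma> c h i < R - c i * x - \<gamma> / 2 * x\<^sup>2"
    using less by (rule order_tendstoD)
  moreover have "\<forall>\<^sub>F x in at_right (0::real). 0 < x" by (rule eventually_at_right_less)
  ultimately obtain x where "0 < x" "payoff N R \<gamma> c h i < R - c i * x - \<gamma> / 2 * x\<^sup>2"
    using eventually_happens'[OF trivial_limit_at_right_real eventually_conj] by blast
  moreover have "payoff N R \<gamma> c (h(i := x)) i \<le> payoff N R \<gamma> c h i" using opt \<open>0 < x\<close> by simp
  ultimately show False using dev[OF \<open>0 < x\<close>] by linarith
qed

text \<open>Summing h_i (R + \<gamma> H^2) = H (R - c_i H) over the active miners 1..n gives
  aggregate n H = (n - 1) R.\<close>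

definition aggregate :: "nat \<Rightarrow> real \<Rightarrow> real" where
  "aggregate n H = \<gamma> * H\<^sup>2 + (\<Sum>i\<in>{1..n}. c i) * H"

lemma aggregate_less_iff:
  assumes "1 \<le> n" "n \<le> N" "0 \<le> x" "0 \<le> y"
  shows "aggregate n x < aggregate n y \<longleftrightarrow> x < y"
proof -
  have C: "0 < (\<Sum>i\<in>{1..n}. c i)" using assms cost_pos by (intro sum_pos) auto
  have strict: "aggregate n u < aggregate n v" if "0 \<le> u" "u < v" for u v
  proof -
    have "\<gamma> * u\<^sup>2 \<le> \<gamma> * v\<^sup>2" using that capacity_nonneg by (intro mult_left_mono power_mono) auto
    moreover have "(\<Sum>i\<in>{1..n}. c i) * u < (\<Sum>i\<in>{1..n}. c i) * v" using that C by simp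
    ultimately show ?thesis by (simp add: aggregate_def)
  qed
  show ?thesis using strict[of x y] strict[of y x] assms by (cases x y rule: linorder_cases) auto
qed

lemma aggregate_le:
  assumes "n \<le> m" "m \<le> N" "0 \<le> u"
  shows "aggregate m u \<le> aggregate n u + (real m - real n) * c m * u"
proof -
  have "{1..m} = {1..n} \<union> {n<..m}" using assms by auto
  then have "(\<Sum>i\<in>{1..m}. c i) = (\<Sum>i\<in>{1..n}. c i) + (\<Sum>i\<in>{n<..m}. c i)"
    by (simp add: sum.union_disjoint ivl_disj_int_two(8))
  also have "(\<Sum>i\<in>{n<..m}. c i) \<le> real (card {n<..m}) * c m"
    using assms by (intro sum_bounded_above) (auto intro: cost_le)
  finally have "(\<Sum>i\<in>{1..m}. c i) \<le> (\<Sum>i\<in>{1..n}. c i) + (real m - real n) * c m"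
    using assms by (simp add: of_nat_diff)
  then have "(\<Sum>i\<in>{1..m}. c i) * u \<le> ((\<Sum>i\<in>{1..n}. c i) + (real m - real n) * c m) * u"
    using assms by (intro mult_right_mono)
  then show ?thesis by (simp add: aggregate_def algebra_simps)
qed

lemma aggregate_Suc: "aggregate (Suc n) u = aggregate n u + c (Suc n) * u"
  by (simp add: aggregate_def algebra_simps)

lemma viable_iff_aggregate:
  assumes "2 \<le> n" "n \<le> N"
  shows "viable N R \<gamma> c n \<longleftrightarrow> (real n - 1) * R < aggregate n (R / c n)"
proof -
  define C where "C = (\<Sum>i\<in>{1..n}. c i)"
  have n1: "0 < real n - 1" using assms by simp
  have cn: "0 < c n" using assms cost_pos by simp
  have "viable N R \<gamma> c n \<longleftrightarrow> c n * (real n - 1) < C + R * \<gamma> / c n"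
    using assms n1 by (simp add: viable_def C_def pos_less_divide_eq)
  also have "\<dots> \<longleftrightarrow> R / c n * (c n * (real n - 1)) < R / c n * (C + R * \<gamma> / c n)"
    by (rule mult_less_cancel_left_pos[symmetric]) (use cn reward_pos in simp)
  also have "R / c n * (c n * (real n - 1)) = (real n - 1) * R" using cn by simp
  also have "R / c n * (C + R * \<gamma> / c n) = aggregate n (R / c n)"
    by (simp add: aggregate_def C_def algebra_simps power2_eq_square)
  finally show ?thesis .
qed

lemma viable_two: "viable N R \<gamma> c 2"
proof -
  have "0 < c 1 + R * \<gamma> / c 2"
    using cost_pos_1 reward_pos capacity_nonneg cost_pos[of 2] two_le_N by (simp add: add_pos_nonneg)
  then show ?thesis using two_le_N by (simp add: viable_def numeral_2_eq_2)
qed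

text \<open>H is the total hash rate of an equilibrium whose active miners are 1..n.\<close>

definition equilibrium_total :: "nat \<Rightarrow> real \<Rightarrow> bool" where
  "equilibrium_total n H \<longleftrightarrow> 0 < H \<and> 2 \<le> n \<and> n \<le> N \<and> c n * H < R \<and>
     (\<forall>i\<in>{n<..N}. R \<le> c i * H) \<and> aggregate n H = (real n - 1) * R"

lemma is_equilibrium_if_total:
  assumes "equilibrium_total n H"
  shows "is_equilibrium N R \<gamma> c (\<lambda>i. hash_given_total R \<gamma> (c i) H)"
proof -
  let ?h = "\<lambda>i. hash_given_total R \<gamma> (c i) H"
  from assms have H: "0 < H" and n: "n \<le> N" and "c n * H < R"
    and high: "\<forall>i\<in>{n<..N}. R \<le> c i * H" and agg: "aggregate n H = (real n - 1) * R"
    by (auto simp: equilibrium_total_def)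
  have low: "\<forall>i\<in>{1..n}. c i * H < R"
  proof
    fix i
    assume "i \<in> {1..n}"
    then have "c i * H \<le> c n * H" using n H cost_le by (auto intro: mult_right_mono)
    then show "c i * H < R" using \<open>c n * H < R\<close> by simp
  qed
  have "total_hash N ?h = H"
    using sum_hash_given_total_eq_iff[OF H reward_pos capacity_nonneg n low high] agg
    by (simp add: total_hash_def aggregate_def)
  moreover have "0 \<le> ?h i" "?h i < H" if "i \<in> {1..N}" for i
    using hash_given_total_bounds[OF H reward_pos capacity_nonneg cost_pos[OF that]] by auto
  ultimately show ?thesis
    using is_equilibrium_iff_hash_given_total[of N ?h R \<gamma> c] reward_pos capacity_nonneg by simp
qed

lemma equilibrium_total_card_active:
  assumes eq: "is_equilibrium N R \<gamma> c h"
  shows "equilibrium_total (card (active_miners N h)) (total_hash N h)"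
proof -
  let ?H = "total_hash N h"
  define n where "n = card (active_miners N h)"
  have nonneg: "\<forall>i\<in>{1..N}. 0 \<le> h i" using eq by (simp add: is_equilibrium_def)
  have others: "\<forall>i\<in>{1..N}. h i < ?H" using equilibrium_hash_lt_total[OF eq] by blast
  have "1 \<in> {1..N}" using two_le_N by simp
  then have H: "0 < ?H" using nonneg others by (meson le_less_trans)
  have resp: "\<forall>i\<in>{1..N}. h i = hash_given_total R \<gamma> (c i) ?H"
    using is_equilibrium_iff_hash_given_total[OF nonneg others reward_pos capacity_nonneg] eq by simp
  have active: "active_miners N h = {i\<in>{1..N}. c i * ?H < R}"
    using resp hash_given_total_pos_iff[OF H reward_pos capacity_nonneg] by (auto simp: active_miners_def)
  have sub: "active_miners N h \<subseteq> {1..N}" by (auto simp: active_miners_def)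
  have "active_miners N h = {1..n}"
    unfolding n_def
  proof (rule down_closed_eq_atLeastAtMost_card[OF sub])
    show "\<forall>j\<in>active_miners N h. \<forall>i. 1 \<le> i \<and> i \<le> j \<longrightarrow> i \<in> active_miners N h"
    proof (intro ballI allI impI)
      fix j i
      assume "j \<in> active_miners N h" "1 \<le> i \<and> i \<le> j"
      then have "i \<in> {1..N}" "c i * ?H \<le> c j * ?H" "c j * ?H < R"
        using H cost_le by (auto simp: active intro: mult_right_mono)
      then show "i \<in> active_miners N h" by (simp add: active)
    qed
  qed
  then have prefix: "i \<in> {1..n} \<longleftrightarrow> i \<in> {1..N} \<and> c i * ?H < R" for i
    using active by blast
  have "n \<le> N" unfolding n_def using card_mono[OF _ sub] by simp
  have low: "\<forall>i\<in>{1..n}. c i * ?H < R" using prefix by blast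
  have high: "\<forall>i\<in>{n<..N}. R \<le> c i * ?H"
  proof
    fix i
    assume "i \<in> {n<..N}"
    then have "i \<notin> {1..n}" "i \<in> {1..N}" by auto
    then show "R \<le> c i * ?H" using prefix[of i] by auto
  qed
  have agg: "aggregate n ?H = (real n - 1) * R"
    using sum_hash_given_total_eq_iff[OF H reward_pos capacity_nonneg \<open>n \<le> N\<close> low high] resp
    by (simp add: total_hash_def aggregate_def)
  have "2 \<le> n"
  proof (rule ccontr)
    assume "\<not> 2 \<le> n"
    then have "n = 0 \<or> n = 1" by auto
    moreover have "0 \<le> \<gamma> * ?H\<^sup>2" "0 < c 1 * ?H" using capacity_nonneg cost_pos_1 H by simp_all
    ultimately have "(real n - 1) * R < aggregate n ?H"
      using reward_pos by (auto simp: aggregate_def)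
    with agg show False by simp
  qed
  then show ?thesis
    using H \<open>n \<le> N\<close> low high agg unfolding equilibrium_total_def n_def[symmetric] by auto
qed

lemma num_active_eq_if_total:
  assumes "equilibrium_total n H"
  shows "num_active N R \<gamma> c = n"
proof -
  from assms have H: "0 < H" and n: "2 \<le> n" "n \<le> N" and "c n * H < R"
    and high: "\<forall>i\<in>{n<..N}. R \<le> c i * H" and agg: "aggregate n H = (real n - 1) * R"
    by (auto simp: equilibrium_total_def)
  have "H < R / c n" using \<open>c n * H < R\<close> n cost_pos by (simp add: pos_less_divide_eq mult.commute)
  then have "aggregate n H < aggregate n (R / c n)" using aggregate_less_iff n H by simp
  then have "viable N R \<gamma> c n" using viable_iff_aggregate n agg by simp
  moreover have "m \<le> n" if "viable N R \<gamma> c m" for m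
  proof (rule ccontr)
    assume "\<not> m \<le> n"
    moreover have m: "2 \<le> m" "m \<le> N" using that by (auto simp: viable_def)
    ultimately have u: "0 < R / c m" "R / c m \<le> H"
      using high cost_pos reward_pos by (auto simp: pos_divide_le_eq mult.commute)
    have "(real m - 1) * R < aggregate m (R / c m)" using that viable_iff_aggregate m by simp
    also have "\<dots> \<le> aggregate n (R / c m) + (real m - real n) * c m * (R / c m)"
      using \<open>\<not> m \<le> n\<close> m u by (intro aggregate_le) auto
    also have "(real m - real n) * c m * (R / c m) = (real m - real n) * R"
      using cost_pos[of m] m by simp
    also have "aggregate n (R / c m) \<le> aggregate n H"
      using aggregate_less_iff[of n H "R / c m"] n u H by simp
    finally show False using agg by (simp add: algebra_simps)
  qed
  ultimately show ?thesis unfolding num_active_eq_Greatest by (rule Greatest_equality)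
qed

lemma ex_equilibrium_total: "\<exists>H. equilibrium_total (num_active N R \<gamma> c) H"
proof -
  define n where "n = num_active N R \<gamma> c"
  have "viable N R \<gamma> c n" unfolding n_def using viable_two by (rule viable_num_active)
  then have n: "2 \<le> n" "n \<le> N" and via: "(real n - 1) * R < aggregate n (R / c n)"
    using viable_iff_aggregate by (auto simp: viable_def)
  have "0 < (\<Sum>i\<in>{1..n}. c i)" using n cost_pos by (intro sum_pos) auto
  moreover have "0 < (real n - 1) * R" using n reward_pos by simp
  ultimately obtain H where H: "0 < H" and agg: "aggregate n H = (real n - 1) * R"
    using quadratic_root capacity_nonneg unfolding aggregate_def by blast
  have cn: "0 < c n" using n cost_pos by simp
  have "H < R / c n" using via agg aggregate_less_iff[of n H "R / c n"] n H cn reward_pos by simp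
  then have "c n * H < R" using cn by (simp add: pos_less_divide_eq mult.commute)
  moreover have "R \<le> c i * H" if i: "i \<in> {n<..N}" for i
  proof -
    have n1: "Suc n \<le> N" using i by simp
    have c1: "0 < c (Suc n)" using n1 cost_pos by simp
    have "\<not> viable N R \<gamma> c (Suc n)" using le_num_active n_def by fastforce
    then have "aggregate (Suc n) (R / c (Suc n)) \<le> real n * R"
      using viable_iff_aggregate[of "Suc n"] n n1 by simp
    then have "aggregate n (R / c (Suc n)) \<le> aggregate n H"
      using c1 agg by (simp add: aggregate_Suc algebra_simps)
    then have "R / c (Suc n) \<le> H"
      using aggregate_less_iff[of n H "R / c (Suc n)"] n H c1 reward_pos by simp
    then have "R \<le> c (Suc n) * H" using c1 by (simp add: pos_divide_le_eq mult.commute)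
    also have "\<dots> \<le> c i * H" using i H cost_le[of "Suc n" i] by (simp add: mult_right_mono)
    finally show ?thesis .
  qed
  ultimately show ?thesis unfolding equilibrium_total_def n_def[symmetric] using H n agg by blast
qed

end

theorem proposition4p4:
  fixes N :: nat and c :: "nat \<Rightarrow> real" and R \<gamma> :: real
  assumes "N \<ge> 2"
    and "c 1 > 0"
    and "\<forall>i j. 1 \<le> i \<longrightarrow> i \<le> j \<longrightarrow> j \<le> N \<longrightarrow> c i \<le> c j"
    and "R > 0"
    and "\<gamma> \<ge> 0"
  shows "(\<exists>h. is_equilibrium N R \<gamma> c h)
    \<and> (\<forall>h. is_equilibrium N R \<gamma> c h \<longrightarrow> card (active_miners N h) = num_active N R \<gamma> c)
    \<and> (\<forall>R'. R \<le> R' \<longrightarrow> num_active N R \<gamma> c \<le> num_active N R' \<gamma> c)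
    \<and> (\<forall>\<gamma>'. \<gamma> \<le> \<gamma>' \<longrightarrow> num_active N R \<gamma> c \<le> num_active N R \<gamma>' c)"
proof -
  have "mono_on {1..N} c" using assms(3) by (intro mono_onI) auto
  then interpret mining_game N R \<gamma> c
    using assms by unfold_locales
  obtain H where "equilibrium_total (num_active N R \<gamma> c) H"
    using ex_equilibrium_total ..
  then have "is_equilibrium N R \<gamma> c (\<lambda>i. hash_given_total R \<gamma> (c i) H)"
    by (rule is_equilibrium_if_total)
  moreover have "card (active_miners N h) = num_active N R \<gamma> c" if "is_equilibrium N R \<gamma> c h" for h
    using num_active_eq_if_total[OF equilibrium_total_card_active[OF that]] by simp
  moreover have "num_active N R \<gamma> c \<le> num_active N R' \<gamma>' c" if "R \<le> R'" "\<gamma> \<le> \<gamma>'" for R' \<gamma>'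
  proof -
    have "R * \<gamma> \<le> R' * \<gamma>'" using that reward_pos capacity_nonneg by (intro mult_mono) auto
    with viable_two show ?thesis using cost_pos by (blast intro: num_active_mono)
  qed
  ultimately show ?thesis by blast
qed

end
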